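(* Let $\mathscr{X}$ be a complex Banach space, $\mathcal{A}\subseteq\mathcal{B}(\mathscr{X})$ a reflexive algebra, and $S\in\mathcal{B}(\mathscr{X})$ invertible. The following are equivalent: (a) $S\in\mathrm{Col}(\mathcal{A})$; (b) $S\mathcal{A}_x\in\mathrm{Lat}(\mathcal{A})$ and $S^{-1}\mathcal{A}_x\in\mathrm{Lat}(\mathcal{A})$ for all $x\in\mathscr{X}$; (c) $S\mathcal{A}S^{-1}=\mathcal{A}$; (d) $\mathrm{Lat}(S\mathcal{A}S^{-1})=\mathrm{Lat}(\mathcal{A})$; (e) $S\mathcal{A}_x=\mathcal{A}_{Sx}$ for all $x\in\mathscr{X}$.
   Context: $\mathrm{Lat}(\mathcal{T})$ is the set of closed subspaces invariant under all operators in $\mathcal{T}\subseteq\mathcal{B}(\mathscr{X})$; $\mathrm{Alg}(\mathfrak{F})=\{T\in\mathcal{B}(\mathscr{X}):T\mathscr{M}\subseteq\mathscr{M}\ \forall\mathscr{M}\in\mathfrak{F}\}$. A reflexive algebra is a subalgebra $\mathcal{A}\subseteq\mathcal{B}(\mathscr{X})$ with $\mathrm{Alg}\,\mathrm{Lat}(\mathcal{A})=\mathcal{A}$. For $x\in\mathscr{X}$, $\mathcal{A}_x=\overline{\{Ax:A\in\mathcal{A}\}}$. An invertible $S$ is a collineation of a family $\mathfrak{F}$ of closed subspaces if for all closed subspaces $\mathscr{M}$: $\mathscr{M}\in\mathfrak{F}$ iff $S\mathscr{M}\in\mathfrak{F}$; $\mathrm{Col}(\mathcal{A}):=\mathrm{Col}(\mathrm{Lat}(\mathcal{A}))$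 is the group of collineations of $\mathrm{Lat}(\mathcal{A})$. *)

theory Defs
  imports "HOL-Analysis.Analysis"
begin

text \<open>A complex Banach space is encoded as a real Banach space 'a::banach together
with a complex structure J (multiplication by the imaginary unit).\<close>

definition cscale :: "('a::real_vector \<Rightarrow> 'a) \<Rightarrow> complex \<Rightarrow> 'a \<Rightarrow> 'a" where
  "cscale J c x = Re c *\<^sub>R x + Im c *\<^sub>R J x"

definition complex_structure :: "('a::real_normed_vector \<Rightarrow> 'a) \<Rightarrow> bool" where
  "complex_structure J \<longleftrightarrow> bounded_linear J \<and> (\<forall>x. J (J x) = - x)
     \<and> (\<forall>c x. norm (cscale J c x) = cmod c * norm x)"

definition Bops :: "('a::real_normed_vector \<Rightarrow> 'a) \<Rightarrow> ('a \<Rightarrow> 'a) set" where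
  "Bops J = {T. bounded_linear T \<and> (\<forall>x. T (J x) = J (T x))}"

definition invertible_op :: "('a::real_normed_vector \<Rightarrow> 'a) \<Rightarrow> ('a \<Rightarrow> 'a) \<Rightarrow> bool" where
  "invertible_op J S \<longleftrightarrow> S \<in> Bops J \<and> (\<exists>S'\<in>Bops J. S \<circ> S' = id \<and> S' \<circ> S = id)"

definition closed_csubspace :: "('a::real_normed_vector \<Rightarrow> 'a) \<Rightarrow> 'a set \<Rightarrow> bool" where
  "closed_csubspace J M \<longleftrightarrow> closed M \<and> subspace M \<and> J ` M \<subseteq> M"

definition Lat :: "('a::real_normed_vector \<Rightarrow> 'a) \<Rightarrow> ('a \<Rightarrow> 'a) set \<Rightarrow> 'a set set" where
  "Lat J \<T> = {M. closed_csubspace J M \<and> (\<forall>T\<in>\<T>. T ` M \<subseteq> M)}"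

definition Alg :: "('a::real_normed_vector \<Rightarrow> 'a) \<Rightarrow> 'a set set \<Rightarrow> ('a \<Rightarrow> 'a) set" where
  "Alg J F = {T \<in> Bops J. \<forall>M\<in>F. T ` M \<subseteq> M}"

definition subalgebra :: "('a::real_normed_vector \<Rightarrow> 'a) \<Rightarrow> ('a \<Rightarrow> 'a) set \<Rightarrow> bool" where
  "subalgebra J \<A> \<longleftrightarrow> \<A> \<subseteq> Bops J \<and> (\<lambda>x. 0) \<in> \<A>
     \<and> (\<forall>A\<in>\<A>. \<forall>B\<in>\<A>. (\<lambda>x. A x + B x) \<in> \<A> \<and> A \<circ> B \<in> \<A>)
     \<and> (\<forall>c. \<forall>A\<in>\<A>. (\<lambda>x. cscale J c (A x)) \<in> \<A>)"

definition reflexive_algebra :: "('a::real_normed_vector \<Rightarrow> 'a) \<Rightarrow> ('a \<Rightarrow> 'a) set \<Rightarrow> bool" where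
  "reflexive_algebra J \<A> \<longleftrightarrow> subalgebra J \<A> \<and> Alg J (Lat J \<A>) = \<A>"

definition orbit_sp :: "('a::real_normed_vector \<Rightarrow> 'a) set \<Rightarrow> 'a \<Rightarrow> 'a set" where
  "orbit_sp \<A> x = closure {A x | A. A \<in> \<A>}"

definition collineation :: "('a::real_normed_vector \<Rightarrow> 'a) \<Rightarrow> 'a set set \<Rightarrow> ('a \<Rightarrow> 'a) \<Rightarrow> bool" where
  "collineation J F S \<longleftrightarrow> invertible_op J S \<and>
     (\<forall>M. closed_csubspace J M \<longrightarrow> (M \<in> F \<longleftrightarrow> S ` M \<in> F))"

definition Col :: "('a::real_normed_vector \<Rightarrow> 'a) \<Rightarrow> ('a \<Rightarrow> 'a) set \<Rightarrow> ('a \<Rightarrow> 'a) set" where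
  "Col J \<A> = {S. collineation J (Lat J \<A>) S}"

end

theory Submission
  imports Defs
begin

text \<open>Conjugation transports invariant subspaces: \<open>M\<close> is invariant for
\<open>S \<A> S\<^sup>-\<^sup>1\<close> iff \<open>S\<^sup>-\<^sup>1 M\<close> is invariant for \<open>\<A>\<close>. Hence \<open>S\<close> is a collineation iff
\<open>Lat (S \<A> S\<^sup>-\<^sup>1) = Lat \<A>\<close>, and then reflexivity, which puts into \<open>\<A>\<close> every operator
leaving all of \<open>Lat \<A>\<close> invariant, yields \<open>S \<A> S\<^sup>-\<^sup>1 \<subseteq> \<A>\<close> and, applied to \<open>S\<^sup>-\<^sup>1\<close>,
equality. Since \<open>\<A>\<close> contains the identity, \<open>\<A>\<^sub>x\<close> is the least member of
\<open>Lat \<A>\<close> containing \<open>x\<close>, and a closed subspace belongs to \<open>Lat \<A>\<close> iff it contains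
\<open>\<A>\<^sub>x\<close> for each of its points \<open>x\<close>; so whether \<open>S\<close> and \<open>S\<^sup>-\<^sup>1\<close> preserve
\<open>Lat \<A>\<close> can be tested on the orbits \<open>\<A>\<^sub>x\<close> alone.\<close>

lemma subspace_closure:
  fixes S :: "'a::real_normed_vector set"
  assumes "subspace S"
  shows "subspace (closure S)"
proof -
  have "(\<lambda>z. fst z + snd z) ` closure (S \<times> S) \<subseteq> closure S"
    using assms by (intro image_closure_subset continuous_intros)
      (auto simp: subspace_add intro: closure_subset[THEN subsetD])
  then have add: "x + y \<in> closure S" if "x \<in> closure S" "y \<in> closure S" for x y
    using that by (fastforce simp: closure_Times image_subset_iff)
  have scale: "(\<lambda>x. c *\<^sub>R x) ` closure S \<subseteq> closure S" for c
    using assms by (intro image_closure_subset continuous_intros)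
      (auto simp: subspace_scale intro: closure_subset[THEN subsetD])
  show ?thesis
    using add scale assms closure_subset subspace_0 unfolding subspace_def by blast
qed

lemma linear_image_closure_subset:
  assumes "bounded_linear T" "T ` S \<subseteq> S"
  shows "T ` closure S \<subseteq> closure S"
  using assms closure_subset
  by (intro image_closure_subset) (auto simp: linear_continuous_on)

lemma invertible_op_bij: "invertible_op J S \<Longrightarrow> bij S"
  unfolding invertible_op_def using o_bij by blast

lemma invertible_op_inv_apply:
  assumes "invertible_op J S"
  shows "inv S (S x) = x" "S (inv S y) = y"
  using invertible_op_bij[OF assms] by (simp_all add: bij_is_inj bij_is_surj surj_f_inv_f)

lemma invertible_op_inv_image:
  assumes "invertible_op J S"
  shows "inv S ` S ` M = M" "S ` inv S ` M = M"
  by (simp_all add: image_image invertible_op_inv_apply[OF assms])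

lemma invertible_op_inv:
  assumes "invertible_op J S"
  shows "invertible_op J (inv S)"
proof -
  obtain S' where "S' \<in> Bops J" "S \<circ> S' = id" "S' \<circ> S = id"
    using assms unfolding invertible_op_def by blast
  moreover have "inv S = S'"
    using calculation inv_unique_comp by blast
  ultimately show ?thesis
    using assms unfolding invertible_op_def by blast
qed

lemma closed_csubspace_image:
  assumes S: "invertible_op J S" and M: "closed_csubspace J M"
  shows "closed_csubspace J (S ` M)"
proof -
  have lin: "bounded_linear S" "bounded_linear (inv S)" and comm: "\<And>x. S (J x) = J (S x)"
    using S invertible_op_inv[OF S] by (auto simp: invertible_op_def Bops_def)
  have "S ` M = inv S -` M"
    using S by (simp add: bij_vimage_eq_inv_image bij_imp_bij_inv inv_inv_eq invertible_op_bij)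
  then have "closed (S ` M)"
    using M lin(2) unfolding closed_csubspace_def
    by (auto intro: continuous_closed_vimage linear_continuous_at)
  moreover have "subspace (S ` M)"
    using M lin(1) unfolding closed_csubspace_def
    by (auto intro: linear_subspace_image bounded_linear.linear)
  moreover have "J ` S ` M \<subseteq> S ` M"
    using M comm unfolding closed_csubspace_def by (auto simp flip: comm)
  ultimately show ?thesis
    unfolding closed_csubspace_def by blast
qed

lemma closed_csubspace_image_iff:
  assumes "invertible_op J S"
  shows "closed_csubspace J (S ` M) \<longleftrightarrow> closed_csubspace J M"
  using closed_csubspace_image[OF invertible_op_inv[OF assms], of "S ` M"]
    closed_csubspace_image[OF assms]
  by (auto simp: image_inv_f_f bij_is_inj invertible_op_bij[OF assms])

lemma Bops_conj:
  assumes "invertible_op J S" "T \<in> Bops J"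
  shows "S \<circ> T \<circ> inv S \<in> Bops J"
proof -
  have "S \<in> Bops J" "inv S \<in> Bops J"
    using assms(1) invertible_op_inv[OF assms(1)] by (auto simp: invertible_op_def)
  then show ?thesis
    using assms(2) by (auto simp: Bops_def o_def intro: bounded_linear_compose)
qed

lemma Lat_conj_iff:
  assumes "invertible_op J S"
  shows "M \<in> Lat J ((\<lambda>T. S \<circ> T \<circ> inv S) ` \<T>) \<longleftrightarrow> inv S ` M \<in> Lat J \<T>"
proof -
  have bij: "bij S" using invertible_op_bij[OF assms] .
  have "S ` X \<subseteq> M \<longleftrightarrow> X \<subseteq> inv S ` M" for X
    by (simp add: image_subset_iff_subset_vimage bij_vimage_eq_inv_image[OF bij])
  moreover have "(S \<circ> T \<circ> inv S) ` M = S ` T ` inv S ` M" for T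
    by (simp add: image_comp)
  ultimately have "(S \<circ> T \<circ> inv S) ` M \<subseteq> M \<longleftrightarrow> T ` inv S ` M \<subseteq> inv S ` M" for T
    by simp
  then show ?thesis
    by (simp add: Lat_def closed_csubspace_image_iff[OF invertible_op_inv[OF assms]])
qed

lemma Col_iff:
  assumes S: "invertible_op J S"
  shows "S \<in> Col J \<T> \<longleftrightarrow> (\<forall>M\<in>Lat J \<T>. S ` M \<in> Lat J \<T> \<and> inv S ` M \<in> Lat J \<T>)"
    (is "_ \<longleftrightarrow> ?images")
proof -
  have "S \<in> Col J \<T> \<longleftrightarrow> (\<forall>M. closed_csubspace J M \<longrightarrow> (M \<in> Lat J \<T> \<longleftrightarrow> S ` M \<in> Lat J \<T>))"
    using S by (simp add: Col_def collineation_def)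
  also have "\<dots> \<longleftrightarrow> ?images"
  proof safe
    fix M assume col: "\<forall>M. closed_csubspace J M \<longrightarrow> (M \<in> Lat J \<T> \<longleftrightarrow> S ` M \<in> Lat J \<T>)"
      and M: "M \<in> Lat J \<T>"
    then have closed: "closed_csubspace J M" by (simp add: Lat_def)
    show "S ` M \<in> Lat J \<T>" using col closed M by blast
    show "inv S ` M \<in> Lat J \<T>"
      using col closed_csubspace_image[OF invertible_op_inv[OF S] closed] M
        invertible_op_inv_image(2)[OF S] by metis
  next
    fix M assume "?images" "closed_csubspace J M"
    then show "M \<in> Lat J \<T> \<Longrightarrow> S ` M \<in> Lat J \<T>" "S ` M \<in> Lat J \<T> \<Longrightarrow> M \<in> Lat J \<T>"
      using invertible_op_inv_image(1)[OF S] by metis+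
  qed
  finally show ?thesis .
qed

lemma Col_inv:
  assumes "S \<in> Col J \<T>"
  shows "inv S \<in> Col J \<T>"
proof -
  have S: "invertible_op J S"
    using assms by (simp add: Col_def collineation_def)
  show ?thesis
    using assms Col_iff[OF S] Col_iff[OF invertible_op_inv[OF S]]
    by (simp add: inv_inv_eq invertible_op_bij[OF S])
qed

lemma Lat_conj_eq_iff_Col:
  assumes S: "invertible_op J S"
  shows "Lat J ((\<lambda>T. S \<circ> T \<circ> inv S) ` \<T>) = Lat J \<T> \<longleftrightarrow> S \<in> Col J \<T>"
proof -
  have "Lat J ((\<lambda>T. S \<circ> T \<circ> inv S) ` \<T>) = Lat J \<T>
    \<longleftrightarrow> (\<forall>M. inv S ` M \<in> Lat J \<T> \<longleftrightarrow> M \<in> Lat J \<T>)"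
    by (simp add: set_eq_iff Lat_conj_iff[OF S])
  also have "\<dots> \<longleftrightarrow> (\<forall>M\<in>Lat J \<T>. S ` M \<in> Lat J \<T> \<and> inv S ` M \<in> Lat J \<T>)"
  proof safe
    fix M assume "\<forall>M. inv S ` M \<in> Lat J \<T> \<longleftrightarrow> M \<in> Lat J \<T>" "M \<in> Lat J \<T>"
    then show "S ` M \<in> Lat J \<T>" "inv S ` M \<in> Lat J \<T>"
      using invertible_op_inv_image(1)[OF S, of M] by metis+
  next
    fix M assume "\<forall>M\<in>Lat J \<T>. S ` M \<in> Lat J \<T> \<and> inv S ` M \<in> Lat J \<T>"
    then show "M \<in> Lat J \<T> \<Longrightarrow> inv S ` M \<in> Lat J \<T>" "inv S ` M \<in> Lat J \<T> \<Longrightarrow> M \<in> Lat J \<T>"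
      using invertible_op_inv_image(2)[OF S, of M] by metis+
  qed
  also have "\<dots> \<longleftrightarrow> S \<in> Col J \<T>"
    by (rule Col_iff[OF S, symmetric])
  finally show ?thesis .
qed

lemma reflexive_algebra_contains:
  assumes "reflexive_algebra J \<A>" "\<T> \<subseteq> Bops J" "Lat J \<A> \<subseteq> Lat J \<T>"
  shows "\<T> \<subseteq> \<A>"
proof
  fix T assume T: "T \<in> \<T>"
  have "T ` M \<subseteq> M" if "M \<in> Lat J \<A>" for M
    using assms(3) that T by (auto simp: Lat_def)
  then have "T \<in> Alg J (Lat J \<A>)"
    using assms(2) T by (auto simp: Alg_def)
  then show "T \<in> \<A>"
    using assms(1) by (simp add: reflexive_algebra_def)
qed

lemma conj_subset_if_Col:
  assumes "reflexive_algebra J \<A>" "S \<in> Col J \<A>"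
  shows "(\<lambda>T. S \<circ> T \<circ> inv S) ` \<A> \<subseteq> \<A>"
proof (rule reflexive_algebra_contains[OF assms(1)])
  have S: "invertible_op J S"
    using assms(2) by (simp add: Col_def collineation_def)
  show "(\<lambda>T. S \<circ> T \<circ> inv S) ` \<A> \<subseteq> Bops J"
    using assms(1) Bops_conj[OF S] by (auto simp: reflexive_algebra_def subalgebra_def)
  show "Lat J \<A> \<subseteq> Lat J ((\<lambda>T. S \<circ> T \<circ> inv S) ` \<A>)"
    using assms(2) by (auto simp: Lat_conj_iff[OF S] Col_iff[OF S])
qed

lemma conj_eq_iff_Col:
  assumes "reflexive_algebra J \<A>" "invertible_op J S"
  shows "(\<lambda>T. S \<circ> T \<circ> inv S) ` \<A> = \<A> \<longleftrightarrow> S \<in> Col J \<A>"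
proof
  assume "(\<lambda>T. S \<circ> T \<circ> inv S) ` \<A> = \<A>"
  then show "S \<in> Col J \<A>"
    using Lat_conj_eq_iff_Col[OF assms(2), of \<A>] by argo
next
  assume Col: "S \<in> Col J \<A>"
  have "A \<in> (\<lambda>T. S \<circ> T \<circ> inv S) ` \<A>" if "A \<in> \<A>" for A
  proof
    show "inv S \<circ> A \<circ> S \<in> \<A>"
      using conj_subset_if_Col[OF assms(1) Col_inv[OF Col]] that
      by (auto simp: inv_inv_eq invertible_op_bij[OF assms(2)])
    show "A = S \<circ> (inv S \<circ> A \<circ> S) \<circ> inv S"
      by (simp add: fun_eq_iff invertible_op_inv_apply[OF assms(2)])
  qed
  then show "(\<lambda>T. S \<circ> T \<circ> inv S) ` \<A> = \<A>"
    using conj_subset_if_Col[OF assms(1) Col] by blast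
qed

lemma id_mem_reflexive_algebra:
  assumes "reflexive_algebra J \<A>"
  shows "id \<in> \<A>"
proof -
  have "id \<in> Alg J (Lat J \<A>)"
    by (simp add: Alg_def Bops_def id_def bounded_linear_ident)
  then show ?thesis
    using assms by (simp add: reflexive_algebra_def)
qed

lemma mem_orbit_sp:
  assumes "id \<in> \<T>"
  shows "x \<in> orbit_sp \<T> x"
proof -
  have "id x \<in> {A x | A. A \<in> \<T>}"
    using assms by blast
  then show ?thesis
    unfolding orbit_sp_def by (simp add: closure_subset[THEN subsetD])
qed

lemma orbit_sp_least:
  assumes "M \<in> Lat J \<T>" "x \<in> M"
  shows "orbit_sp \<T> x \<subseteq> M"
  unfolding orbit_sp_def
  using assms by (intro closure_minimal) (auto simp: Lat_def closed_csubspace_def)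

lemma Lat_iff_orbit_sp_subset:
  "M \<in> Lat J \<T> \<longleftrightarrow> closed_csubspace J M \<and> (\<forall>x\<in>M. orbit_sp \<T> x \<subseteq> M)"
proof (intro iffI conjI ballI)
  assume M: "M \<in> Lat J \<T>"
  then show "closed_csubspace J M" by (simp add: Lat_def)
  show "orbit_sp \<T> x \<subseteq> M" if "x \<in> M" for x
    using orbit_sp_least[OF M that] .
next
  assume M: "closed_csubspace J M \<and> (\<forall>x\<in>M. orbit_sp \<T> x \<subseteq> M)"
  have "T x \<in> M" if "T \<in> \<T>" "x \<in> M" for T x
  proof -
    have "T x \<in> {A x | A. A \<in> \<T>}"
      using that(1) by blast
    then have "T x \<in> orbit_sp \<T> x"
      unfolding orbit_sp_def by (rule closure_subset[THEN subsetD])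
    then show ?thesis using M that(2) by blast
  qed
  then show "M \<in> Lat J \<T>"
    using M by (auto simp: Lat_def)
qed

lemma orbit_sp_in_Lat:
  assumes J: "bounded_linear J" and \<A>: "subalgebra J \<A>"
  shows "orbit_sp \<A> x \<in> Lat J \<A>"
proof -
  define Ax where "Ax = {A x | A. A \<in> \<A>}"
  have closed_under:
      "(\<lambda>y. 0) \<in> \<A>" "\<And>A B. A \<in> \<A> \<Longrightarrow> B \<in> \<A> \<Longrightarrow> (\<lambda>y. A y + B y) \<in> \<A>"
      "\<And>A B. A \<in> \<A> \<Longrightarrow> B \<in> \<A> \<Longrightarrow> A \<circ> B \<in> \<A>"
      "\<And>c A. A \<in> \<A> \<Longrightarrow> (\<lambda>y. cscale J c (A y)) \<in> \<A>"
    using \<A> by (auto simp: subalgebra_def)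
  have "subspace Ax"
    unfolding subspace_def Ax_def
  proof safe
    show "\<exists>A. 0 = A x \<and> A \<in> \<A>"
      using closed_under(1) by force
    show "\<exists>C. A x + B x = C x \<and> C \<in> \<A>" if "A \<in> \<A>" "B \<in> \<A>" for A B
      using closed_under(2)[OF that] by force
    show "\<exists>C. c *\<^sub>R A x = C x \<and> C \<in> \<A>" if "A \<in> \<A>" for c A
      using closed_under(4)[OF that, of "of_real c"] by (force simp: cscale_def)
  qed
  moreover have "J ` Ax \<subseteq> Ax"
  proof (clarsimp simp: Ax_def)
    fix A assume "A \<in> \<A>"
    then show "\<exists>C. J (A x) = C x \<and> C \<in> \<A>"
      using closed_under(4)[of A \<i>] by (auto simp: cscale_def)
  qed
  moreover have "B ` Ax \<subseteq> Ax" if "B \<in> \<A>" for B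
  proof (clarsimp simp: Ax_def)
    fix A assume "A \<in> \<A>"
    then show "\<exists>C. B (A x) = C x \<and> C \<in> \<A>"
      using closed_under(3)[OF that \<open>A \<in> \<A>\<close>] by (intro exI[of _ "B \<circ> A"]) simp
  qed
  moreover have "bounded_linear B" if "B \<in> \<A>" for B
    using \<A> that by (auto simp: subalgebra_def Bops_def)
  ultimately show ?thesis
    unfolding orbit_sp_def Ax_def[symmetric] Lat_def closed_csubspace_def
    using J by (simp add: subspace_closure linear_image_closure_subset)
qed

lemma image_in_Lat_if_image_orbit_sp_in_Lat:
  assumes S: "invertible_op J S" and "id \<in> \<T>"
    and orbits: "\<And>x. S ` orbit_sp \<T> x \<in> Lat J \<T>" and M: "M \<in> Lat J \<T>"
  shows "S ` M \<in> Lat J \<T>"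
  unfolding Lat_iff_orbit_sp_subset
proof safe
  show "closed_csubspace J (S ` M)"
    using M S closed_csubspace_image by (auto simp: Lat_def)
  fix m y assume "m \<in> M" "y \<in> orbit_sp \<T> (S m)"
  moreover have "orbit_sp \<T> (S m) \<subseteq> S ` orbit_sp \<T> m"
    using orbit_sp_least[OF orbits] mem_orbit_sp[OF \<open>id \<in> \<T>\<close>] by blast
  moreover have "orbit_sp \<T> m \<subseteq> M"
    using orbit_sp_least[OF M \<open>m \<in> M\<close>] .
  ultimately show "y \<in> S ` M" by blast
qed

context
  fixes J :: "'a::banach \<Rightarrow> 'a" and \<A> :: "('a \<Rightarrow> 'a) set" and S :: "'a \<Rightarrow> 'a"
  assumes J: "complex_structure J" and \<A>: "reflexive_algebra J \<A>" and S: "invertible_op J S"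
begin

lemma orbit_sp_in_Lat_reflexive: "orbit_sp \<A> x \<in> Lat J \<A>"
  using J \<A> by (simp add: orbit_sp_in_Lat complex_structure_def reflexive_algebra_def)

lemma Col_iff_image_orbit_sp_in_Lat:
  "S \<in> Col J \<A> \<longleftrightarrow>
     (\<forall>x. S ` orbit_sp \<A> x \<in> Lat J \<A> \<and> inv S ` orbit_sp \<A> x \<in> Lat J \<A>)"
  unfolding Col_iff[OF S]
  using orbit_sp_in_Lat_reflexive id_mem_reflexive_algebra[OF \<A>]
    image_in_Lat_if_image_orbit_sp_in_Lat[OF S]
    image_in_Lat_if_image_orbit_sp_in_Lat[OF invertible_op_inv[OF S]]
  by blast

lemma Col_iff_image_orbit_sp_eq:
  "S \<in> Col J \<A> \<longleftrightarrow> (\<forall>x. S ` orbit_sp \<A> x = orbit_sp \<A> (S x))"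
proof
  assume "S \<in> Col J \<A>"
  then have images: "S ` orbit_sp \<A> x \<in> Lat J \<A>" "inv S ` orbit_sp \<A> x \<in> Lat J \<A>" for x
    using orbit_sp_in_Lat_reflexive by (auto simp: Col_iff[OF S])
  have mem: "y \<in> orbit_sp \<A> y" for y
    using mem_orbit_sp[OF id_mem_reflexive_algebra[OF \<A>]] .
  show "\<forall>x. S ` orbit_sp \<A> x = orbit_sp \<A> (S x)"
  proof
    fix x
    have "orbit_sp \<A> (S x) \<subseteq> S ` orbit_sp \<A> x"
      using images(1) mem by (intro orbit_sp_least) auto
    moreover have "x \<in> inv S ` orbit_sp \<A> (S x)"
      using imageI[OF mem[of "S x"], of "inv S"] by (simp add: invertible_op_inv_apply[OF S])
    then have "orbit_sp \<A> x \<subseteq> inv S ` orbit_sp \<A> (S x)"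
      by (rule orbit_sp_least[OF images(2)])
    then have "S ` orbit_sp \<A> x \<subseteq> orbit_sp \<A> (S x)"
      by (metis image_mono invertible_op_inv_image(2)[OF S])
    ultimately show "S ` orbit_sp \<A> x = orbit_sp \<A> (S x)" by blast
  qed
next
  assume eq: "\<forall>x. S ` orbit_sp \<A> x = orbit_sp \<A> (S x)"
  have "inv S ` orbit_sp \<A> x = orbit_sp \<A> (inv S x)" for x
    using arg_cong[OF eq[rule_format, of "inv S x"], of "image (inv S)"]
    by (simp add: invertible_op_inv_image[OF S] invertible_op_inv_apply[OF S])
  then show "S \<in> Col J \<A>"
    using eq orbit_sp_in_Lat_reflexive by (simp add: Col_iff_image_orbit_sp_in_Lat)
qed

end

theorem theorem3p9:
  fixes J :: "'a::banach \<Rightarrow> 'a" and \<A> :: "('a \<Rightarrow> 'a) set" and S :: "'a \<Rightarrow> 'a"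
  assumes "complex_structure J"
    and "reflexive_algebra J \<A>"
    and "invertible_op J S"
  shows "(S \<in> Col J \<A> \<longleftrightarrow>
            (\<forall>x. S ` orbit_sp \<A> x \<in> Lat J \<A> \<and> inv S ` orbit_sp \<A> x \<in> Lat J \<A>))
       \<and> (S \<in> Col J \<A> \<longleftrightarrow> (\<lambda>T. S \<circ> T \<circ> inv S) ` \<A> = \<A>)
       \<and> (S \<in> Col J \<A> \<longleftrightarrow> Lat J ((\<lambda>T. S \<circ> T \<circ> inv S) ` \<A>) = Lat J \<A>)
       \<and> (S \<in> Col J \<A> \<longleftrightarrow> (\<forall>x. S ` orbit_sp \<A> x = orbit_sp \<A> (S x)))"
  using Col_iff_image_orbit_sp_in_Lat[OF assms] conj_eq_iff_Col[OF assms(2,3)]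
    Lat_conj_eq_iff_Col[OF assms(3)] Col_iff_image_orbit_sp_eq[OF assms]
  by blast

end
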